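(* Under the hypotheses of Theorem 4 (either case (i) or case (ii)), the solution also satisfies \[ \lim_{t\to\infty}\frac{x(t)}{F^{-1}(t)}=+\infty\qquad\text{and}\qquad\lim_{t\to\infty}\frac{F(x(t))}{t}=0. \] Here Theorem 4's hypotheses are: $f\in C(\mathbb{R};\mathbb{R})$ locally Lipschitz with $f(0)=0$, $xf(x)>0$ for $x\neq0$; $g\in C([0,\infty);\mathbb{R})$ with $g(t)>0$ for $t>0$; $\xi>0$; $x$ is the unique continuous solution of $x'(t)=-f(x(t))+g(t)$, $x(0)=\xi$, and $x(t)\to0$; $\lim_{t\to\infty}g(t)/f(F^{-1}(t))=+\infty$; $f\in\mathrm{RV}_0(\beta)$ with $\beta>1$; $g\in\mathrm{RV}_\infty(-\theta)$ with either $\theta>0$, or $\theta=0$ and $g$ asymptotic to a decreasing function.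
   Context: $F(x)=\int_x^1 \frac{du}{f(u)}$ for $x>0$, strictly decreasing with inverse $F^{-1}$. $\mathrm{RV}_0(\beta)$: measurable positive $\varphi$ on $(0,\infty)$ with $\varphi(\lambda x)/\varphi(x)\to\lambda^\beta$ as $x\to0^+$ for every $\lambda>0$. $\mathrm{RV}_\infty(\alpha)$: measurable positive $h$ with $h(\lambda t)/h(t)\to\lambda^\alpha$ as $t\to\infty$ for every $\lambda>0$. *)

theory Defs
  imports "HOL-Analysis.Analysis" "HOL-Library.Landau_Symbols"
begin

definition loc_lipschitz :: "(real \<Rightarrow> real) \<Rightarrow> bool" where
  "loc_lipschitz f \<longleftrightarrow> (\<forall>u. \<exists>\<delta>>0. \<exists>L. \<forall>a b. \<bar>a - u\<bar> < \<delta> \<longrightarrow> \<bar>b - u\<bar> < \<delta> \<longrightarrow>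
      \<bar>f a - f b\<bar> \<le> L * \<bar>a - b\<bar>)"

definition Fint :: "(real \<Rightarrow> real) \<Rightarrow> real \<Rightarrow> real" where
  "Fint f x = (if x \<le> 1 then integral {x..1} (\<lambda>u. 1 / f u)
               else - integral {1..x} (\<lambda>u. 1 / f u))"

definition Finv :: "(real \<Rightarrow> real) \<Rightarrow> real \<Rightarrow> real" where
  "Finv f t = (THE y. 0 < y \<and> Fint f y = t)"

definition RV0 :: "(real \<Rightarrow> real) \<Rightarrow> real \<Rightarrow> bool" where
  "RV0 \<phi> \<beta> \<longleftrightarrow> \<phi> \<in> borel_measurable (restrict_space borel {0<..}) \<and> (\<forall>x>0. \<phi> x > 0) \<and>
     (\<forall>c>0. ((\<lambda>x. \<phi> (c * x) / \<phi> x) \<longlongrightarrow> c powr \<beta>) (at_right 0))"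

definition RVinf :: "(real \<Rightarrow> real) \<Rightarrow> real \<Rightarrow> bool" where
  "RVinf h \<alpha> \<longleftrightarrow> h \<in> borel_measurable (restrict_space borel {0<..}) \<and> (\<forall>t>0. h t > 0) \<and>
     (\<forall>c>0. ((\<lambda>t. h (c * t) / h t) \<longlongrightarrow> c powr \<alpha>) at_top)"

end

theory Submission
  imports Defs
begin

text \<open>Fix \<open>M > 0\<close>. The function \<open>F(x(t)/M) - t\<close> decreases through each of its zeros: there
  \<open>x(t) = M F\<^sup>-\<^sup>1(t)\<close>, so regular variation gives \<open>f(x(t)) \<le> K f(F\<^sup>-\<^sup>1(t)) < g(t)\<close> and \<open>x\<close> is
  increasing. If it stayed positive, \<open>x(t)/F\<^sup>-\<^sup>1(t)\<close> would eventually lie in a compact subset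
  of \<open>(0,\<infinity>)\<close>: the lower bound comes from \<open>F(x(t)) \<le> F(x(1)) + t\<close> together with
  \<open>F(m u) \<ge> 2 F(u) + C\<close> for a small \<open>m\<close>, which holds because \<open>F\<close> varies regularly at \<open>0\<close> with
  index \<open>1 - \<beta> < 0\<close>. The uniform convergence theorem for \<open>f\<close> would then let \<open>g\<close> dominate \<open>f \<circ> x\<close>,
  driving \<open>F(x(t))\<close> to \<open>-\<infinity>\<close>. Hence \<open>x(t) \<ge> M F\<^sup>-\<^sup>1(t)\<close> eventually, for every \<open>M\<close>; the second
  limit follows from \<open>F(M v) \<le> \<epsilon> F(v) + C\<close> for \<open>M\<close> large, applied to \<open>v = x(t)/M\<close>.\<close>

lemma Fint_has_real_derivative:
  assumes cont: "continuous_on {0<..} (\<lambda>u. 1 / f u)" and u: "u > 0"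
  shows "(Fint f has_real_derivative -(1 / f u)) (at u)"
proof -
  define h where "h = (\<lambda>u. 1 / f u)"
  define a where "a = min (u/2) (1/2)"
  define b where "b = max (2*u) 2"
  have a: "0 < a" "a < u" "a \<le> 1" and b: "u < b" "1 < b"
    using u by (auto simp: a_def b_def)
  have cab: "continuous_on {a..b} h"
    unfolding h_def by (rule continuous_on_subset[OF cont]) (use a in auto)
  have intg: "h integrable_on {c..d}" if "a \<le> c" "d \<le> b" for c d
    by (rule integrable_continuous_interval, rule continuous_on_subset[OF cab]) (use that in auto)
  have rep: "Fint f w = integral {a..1} h - integral {a..w} h" if "w \<in> {a<..<b}" for w
  proof (cases "w \<le> 1")
    case True
    then have "integral {a..w} h + integral {w..1} h = integral {a..1} h"
      using Henstock_Kurzweil_Integration.integral_combine[where f=h and a=a and c=w and b=1] intg[of a 1] that a b by auto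
    then show ?thesis using True by (simp add: Fint_def h_def)
  next
    case False
    then have "integral {a..1} h + integral {1..w} h = integral {a..w} h"
      using Henstock_Kurzweil_Integration.integral_combine[where f=h and a=a and c=1 and b=w] intg[of a w] that a by auto
    then show ?thesis using False by (simp add: Fint_def h_def)
  qed
  have "((\<lambda>w. integral {a..w} h) has_real_derivative h u) (at u within {a..b})"
    by (rule integral_has_real_derivative[OF cab]) (use a b in auto)
  then have "((\<lambda>w. integral {a..w} h) has_real_derivative h u) (at u)"
    using a b by (subst (asm) at_within_interior) auto
  then have "((\<lambda>w. integral {a..1} h - integral {a..w} h) has_real_derivative -(1 / f u)) (at u)"
    by (auto simp: h_def intro!: derivative_eq_intros)
  then show ?thesis
    by (rule has_field_derivative_transform_within_open[where S="{a<..<b}"]) (use a b rep in auto)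
qed

lemma closed_cover_of_interval_contains_interval:
  fixes A :: "nat \<Rightarrow> real set"
  assumes closed: "\<And>n. closed (A n)" and cover: "{a..b} \<subseteq> (\<Union>n. A n)" and "a < b"
  shows "\<exists>n c d. a \<le> c \<and> c < d \<and> d \<le> b \<and> {c..d} \<subseteq> A n"
proof -
  define S where "S = {a..b}"
  have "\<exists>n. \<not> S \<subseteq> closure (S - A n)"
  proof (rule ccontr)
    assume "\<nexists>n. \<not> S \<subseteq> closure (S - A n)"
    moreover have "openin (top_of_set S) (S - A n)" for n
      using openin_open_Int[of "- A n" S] closed[of n] by (simp add: Diff_eq Int_commute open_Compl)
    ultimately have "S \<subseteq> closure (\<Inter>n. S - A n)"
      by (intro Baire) (auto simp: S_def)
    moreover have "(\<Inter>n. S - A n) = {}" using cover by (auto simp: S_def)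
    ultimately have "S \<subseteq> {}" by (metis closure_empty)
    then show False using \<open>a < b\<close> by (simp add: S_def)
  qed
  then obtain n p where p: "p \<in> S" "p \<notin> closure (S - A n)" by blast
  then obtain e where e: "e > 0" "\<And>y. y \<in> S - A n \<Longrightarrow> \<not> dist y p < e"
    unfolding closure_approachable by blast
  define c where "c = max a (p - e/2)"
  define d where "d = min b (p + e/2)"
  have "y \<in> A n" if "c \<le> y" "y \<le> d" for y
  proof -
    have "y \<in> S" "dist y p < e" using that e(1) by (auto simp: c_def d_def S_def dist_real_def)
    then show ?thesis using e(2) by blast
  qed
  then have "{c..d} \<subseteq> A n" by auto
  moreover have "a \<le> c" "c < d" "d \<le> b" using p e \<open>a < b\<close> by (auto simp: c_def d_def S_def)
  ultimately show ?thesis by blast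
qed

text \<open>If \<open>q w > 0\<close>, the last point of \<open>{q \<le> 0}\<close> in \<open>[u, w]\<close> would be a zero through which \<open>q\<close>
  does not decrease.\<close>

lemma nonpos_persists_if_decreasing_at_zeros:
  fixes q :: "real \<Rightarrow> real"
  assumes cont: "continuous_on {T..} q"
    and decr: "\<And>t. t \<ge> T \<Longrightarrow> q t = 0 \<Longrightarrow> \<exists>d. (q has_real_derivative d) (at t) \<and> d < 0"
    and u: "T \<le> u" "q u \<le> 0" and "u \<le> w"
  shows "q w \<le> 0"
proof (rule ccontr)
  assume qw: "\<not> q w \<le> 0"
  define S where "S = {u..w} \<inter> q -` {..0}"
  have cont_uw: "continuous_on {u..w} q" by (rule continuous_on_subset[OF cont]) (use u in auto)
  have "closed S" unfolding S_def by (rule continuous_closed_preimage[OF cont_uw]) auto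
  then have "compact ({u..w} \<inter> S)" by (rule compact_Int_closed[OF compact_Icc])
  then have "compact S" by (simp add: S_def Int_absorb)
  moreover have "u \<in> S" using u \<open>u \<le> w\<close> by (auto simp: S_def)
  ultimately obtain s where "s \<in> S" and s_max: "\<And>t. t \<in> S \<Longrightarrow> t \<le> s"
    using compact_attains_sup[of S] by blast
  then have s: "u \<le> s" "s \<le> w" "q s \<le> 0" by (auto simp: S_def)
  then have "s < w" using qw by (cases "s = w") auto
  have "q s = 0"
  proof (rule ccontr)
    assume "q s \<noteq> 0"
    have "continuous_on {s..w} q" by (rule continuous_on_subset[OF cont_uw]) (use s in auto)
    then obtain r where r: "s \<le> r" "r \<le> w" "q r = 0"
      using IVT'[of q s 0 w] \<open>q s \<noteq> 0\<close> qw s by auto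
    then have "r \<le> s" using s by (intro s_max) (auto simp: S_def)
    then show False using r \<open>q s \<noteq> 0\<close> by auto
  qed
  then obtain d where d: "(q has_real_derivative d) (at s)" "d < 0"
    using decr[of s] s u by auto
  obtain e where e: "e > 0" "\<And>h. h > 0 \<Longrightarrow> h < e \<Longrightarrow> q (s + h) < q s"
    using DERIV_neg_dec_right[OF d] by blast
  define h where "h = min (e/2) (w - s)"
  have h: "h > 0" "h < e" "s + h \<le> w" using e \<open>s < w\<close> by (auto simp: h_def)
  have "s + h \<in> S" using e(2)[OF h(1,2)] \<open>q s = 0\<close> h s by (auto simp: S_def)
  then show False using s_max h by fastforce
qed

lemma ode_solution_pos:
  fixes f g x :: "real \<Rightarrow> real"
  assumes f0: "f 0 = 0" and g_pos: "\<And>t. t > 0 \<Longrightarrow> g t > 0" and x0: "x 0 > 0"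
    and x_deriv: "\<And>t. t > 0 \<Longrightarrow> (x has_real_derivative (- f (x t) + g t)) (at t)"
    and x_cont: "continuous_on {0..} x"
    and "t \<ge> 0"
  shows "x t > 0"
proof -
  have nonneg: "x s \<ge> 0" if "s \<ge> 0" for s
  proof -
    have "(\<lambda>t. - x t) s \<le> 0"
    proof (rule nonpos_persists_if_decreasing_at_zeros[where q="\<lambda>t. - x t" and T=0 and u=0])
      fix s assume s: "s \<ge> 0" "- x s = 0"
      then have "s > 0" using x0 by (cases "s = 0") auto
      then have "((\<lambda>t. - x t) has_real_derivative -(- f (x s) + g s)) (at s)"
        by (intro DERIV_minus x_deriv)
      moreover have "-(- f (x s) + g s) < 0" using g_pos \<open>s > 0\<close> s f0 by simp
      ultimately show "\<exists>d. ((\<lambda>t. - x t) has_real_derivative d) (at s) \<and> d < 0" by blast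
    qed (use x0 x_cont that in \<open>auto intro: continuous_intros\<close>)
    then show ?thesis by simp
  qed
  show ?thesis
  proof (rule ccontr)
    assume "\<not> x t > 0"
    then have xt: "x t = 0" using nonneg[OF \<open>t \<ge> 0\<close>] by auto
    have "t > 0" using xt x0 \<open>t \<ge> 0\<close> by (cases "t = 0") auto
    moreover have "0 < - f (x t) + g t" using xt f0 g_pos \<open>t > 0\<close> by simp
    ultimately obtain d where d: "d > 0" "\<And>h. h > 0 \<Longrightarrow> h < d \<Longrightarrow> x (t - h) < x t"
      using DERIV_pos_inc_left[OF x_deriv] by blast
    define h where "h = min (d/2) t"
    have "x (t - h) < 0" using d(2)[of h] d \<open>t > 0\<close> xt by (auto simp: h_def)
    moreover have "x (t - h) \<ge> 0" by (rule nonneg) (auto simp: h_def)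
    ultimately show False by simp
  qed
qed

locale rv0_continuous =
  fixes f :: "real \<Rightarrow> real" and \<beta> :: real
  assumes RV0: "RV0 f \<beta>" and continuous: "continuous_on {0<..} f"
begin

lemma f_pos: "u > 0 \<Longrightarrow> f u > 0"
  using RV0 unfolding RV0_def by blast

lemma ratio_tendsto: "c > 0 \<Longrightarrow> ((\<lambda>u. f (c * u) / f u) \<longlongrightarrow> c powr \<beta>) (at_right 0)"
  using RV0 unfolding RV0_def by blast

lemma Fint_has_derivative: "u > 0 \<Longrightarrow> (Fint f has_real_derivative -(1 / f u)) (at u)"
  by (rule Fint_has_real_derivative, intro continuous_intros continuous) (auto dest: f_pos)

lemma Fint_scaled_has_derivative:
  "c > 0 \<Longrightarrow> w > 0 \<Longrightarrow> ((\<lambda>w. Fint f (c * w)) has_real_derivative -(1 / f (c * w)) * c) (at w)"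
  by (rule DERIV_chain2[OF Fint_has_derivative]) (auto intro!: derivative_eq_intros)

lemma Fint_strict_antimono: "0 < a \<Longrightarrow> a < b \<Longrightarrow> Fint f b < Fint f a"
  by (rule DERIV_neg_imp_decreasing) (auto intro!: exI Fint_has_derivative f_pos)

lemma Fint_less_iff: "0 < a \<Longrightarrow> 0 < b \<Longrightarrow> Fint f a < Fint f b \<longleftrightarrow> b < a"
  by (metis Fint_strict_antimono linorder_neqE_linordered_idom order_less_asym order_less_irrefl)

lemma Fint_le_iff: "0 < a \<Longrightarrow> 0 < b \<Longrightarrow> Fint f a \<le> Fint f b \<longleftrightarrow> b \<le> a"
  by (meson Fint_less_iff not_le)

lemma Fint_continuous: "continuous_on {0<..} (Fint f)"
  by (rule continuous_at_imp_continuous_on) (auto intro: DERIV_isCont Fint_has_derivative)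

lemma Fint_nonneg: "0 < u \<Longrightarrow> u \<le> 1 \<Longrightarrow> 0 \<le> Fint f u"
  using Fint_le_iff[of 1 u] by (simp add: Fint_def)

lemma Finv_Fint: "0 < v \<Longrightarrow> Finv f (Fint f v) = v"
  unfolding Finv_def
  by (rule the_equality) (use Fint_less_iff in \<open>auto, metis linorder_neqE_linordered_idom less_irrefl\<close>)

lemma ratio_upper_bound:
  assumes "c > 0" "c powr \<beta> < K"
  shows "\<exists>\<delta>>0. \<forall>u. 0 < u \<and> u < \<delta> \<longrightarrow> f (c * u) \<le> K * f u"
proof -
  have "eventually (\<lambda>u. f (c * u) / f u < K \<and> u > 0) (at_right 0)"
    using order_tendstoD(2)[OF ratio_tendsto[OF assms(1)] assms(2)] eventually_at_right_less[of 0]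
    by (rule eventually_conj)
  then have "eventually (\<lambda>u. f (c * u) \<le> K * f u) (at_right 0)"
    by eventually_elim (use f_pos in \<open>auto simp: divide_less_eq\<close>)
  then show ?thesis unfolding eventually_at_right_field by auto
qed

lemma ratio_lower_bound:
  assumes "c > 0" "k < c powr \<beta>"
  shows "\<exists>\<delta>>0. \<forall>u. 0 < u \<and> u < \<delta> \<longrightarrow> k * f u \<le> f (c * u)"
proof -
  have "eventually (\<lambda>u. k < f (c * u) / f u \<and> u > 0) (at_right 0)"
    using order_tendstoD(1)[OF ratio_tendsto[OF assms(1)] assms(2)] eventually_at_right_less[of 0]
    by (rule eventually_conj)
  then have "eventually (\<lambda>u. k * f u \<le> f (c * u)) (at_right 0)"
    by eventually_elim (use f_pos in \<open>auto simp: less_divide_eq\<close>)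
  then show ?thesis unfolding eventually_at_right_field by auto
qed

text \<open>\<open>F(c\<cdot>)\<close> has derivative \<open>-c/f(c\<cdot>)\<close>, so a bound on \<open>f(c\<cdot>)/f\<close> compares the increments of
  \<open>F(c\<cdot>)\<close> and \<open>F\<close>.\<close>

lemma Fint_scaled_diff_ge:
  assumes c: "c > 0" and K: "K > 0" and v: "0 < v" "v \<le> d"
    and bound: "\<And>u. v \<le> u \<Longrightarrow> u \<le> d \<Longrightarrow> f (c * u) \<le> K * f u"
  shows "(c / K) * (Fint f v - Fint f d) \<le> Fint f (c * v) - Fint f (c * d)"
proof -
  have "(\<lambda>w. Fint f (c * w) - (c / K) * Fint f w) d \<le> (\<lambda>w. Fint f (c * w) - (c / K) * Fint f w) v"
  proof (rule deriv_nonpos_imp_antimono[OF _ _ v(2)])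
    fix w assume w: "w \<in> {v..d}"
    then show "((\<lambda>w. Fint f (c * w) - (c / K) * Fint f w) has_real_derivative
        -(1 / f (c * w)) * c - (c / K) * -(1 / f w)) (at w)"
      using v c by (intro DERIV_diff DERIV_cmult Fint_scaled_has_derivative Fint_has_derivative) auto
    have "c / (K * f w) \<le> c / f (c * w)"
      using bound w v c K f_pos[of w] f_pos[of "c * w"] by (intro divide_left_mono) auto
    then show "-(1 / f (c * w)) * c - (c / K) * -(1 / f w) \<le> 0" by simp
  qed
  then show ?thesis by (simp add: algebra_simps)
qed

lemma Fint_scaled_diff_le:
  assumes c: "c > 0" and k: "k > 0" and v: "0 < v" "v \<le> d"
    and bound: "\<And>u. v \<le> u \<Longrightarrow> u \<le> d \<Longrightarrow> k * f u \<le> f (c * u)"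
  shows "Fint f (c * v) - Fint f (c * d) \<le> (c / k) * (Fint f v - Fint f d)"
proof -
  have "(\<lambda>w. Fint f (c * w) - (c / k) * Fint f w) v \<le> (\<lambda>w. Fint f (c * w) - (c / k) * Fint f w) d"
  proof (rule deriv_nonneg_imp_mono[OF _ _ v(2)])
    fix w assume w: "w \<in> {v..d}"
    then show "((\<lambda>w. Fint f (c * w) - (c / k) * Fint f w) has_real_derivative
        -(1 / f (c * w)) * c - (c / k) * -(1 / f w)) (at w)"
      using v c by (intro DERIV_diff DERIV_cmult Fint_scaled_has_derivative Fint_has_derivative) auto
    have "c / f (c * w) \<le> c / (k * f w)"
      using bound w v c k f_pos[of w] f_pos[of "c * w"] by (intro divide_left_mono) auto
    then show "0 \<le> -(1 / f (c * w)) * c - (c / k) * -(1 / f w)" by simp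
  qed
  then show ?thesis by (simp add: algebra_simps)
qed

text \<open>Uniform boundedness of \<open>f(r\<cdot>)/f\<close> for \<open>r\<close> in compact subsets of \<open>(0,\<infinity>)\<close>, following the Baire
  category proof of the uniform convergence theorem for regularly varying functions.\<close>

lemma ratio_two_sided_bound:
  assumes "c > 0" "c powr \<beta> < K" "1 / K < c powr \<beta>"
  shows "\<exists>n::nat. \<forall>v. 0 < v \<and> v < 1 / Suc n \<longrightarrow> f (c * v) \<le> K * f v \<and> f v / K \<le> f (c * v)"
proof -
  obtain \<delta>1 where \<delta>1: "\<delta>1 > 0" "\<And>u. 0 < u \<and> u < \<delta>1 \<Longrightarrow> f (c * u) \<le> K * f u"
    using ratio_upper_bound assms by blast
  obtain \<delta>2 where \<delta>2: "\<delta>2 > 0" "\<And>u. 0 < u \<and> u < \<delta>2 \<Longrightarrow> 1 / K * f u \<le> f (c * u)"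
    using ratio_lower_bound assms by blast
  obtain n :: nat where n: "1 / Suc n < min \<delta>1 \<delta>2"
    using reals_Archimedean[of "min \<delta>1 \<delta>2"] \<delta>1 \<delta>2 by (auto simp: inverse_eq_divide)
  have "f (c * v) \<le> K * f v \<and> f v / K \<le> f (c * v)" if "0 < v" "v < 1 / Suc n" for v
    using that n \<delta>1(2)[of v] \<delta>2(2)[of v] by auto
  then show ?thesis by blast
qed

lemma ratio_bounded_on_interval:
  "\<exists>a b \<delta> K. 0 < a \<and> a < b \<and> 0 < \<delta> \<and> 0 < K \<and>
     (\<forall>c v. a \<le> c \<and> c \<le> b \<and> 0 < v \<and> v < \<delta> \<longrightarrow> f (c * v) \<le> K * f v \<and> f v \<le> K * f (c * v))"
proof -
  define K where "K = 2 * 2 powr \<bar>\<beta>\<bar>"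
  have K: "K > 0" by (simp add: K_def)
  define A where
    "A n = (\<Inter>v\<in>{0<..<1 / Suc n}. {1..2} \<inter> (\<lambda>c. f (c * v)) -` {f v / K .. K * f v})" for n :: nat
  have "closed (A n)" for n
    unfolding A_def
  proof (intro closed_INT ballI continuous_closed_preimage)
    fix v :: real assume "v \<in> {0<..<1 / Suc n}"
    then show "continuous_on {1..2} (\<lambda>c. f (c * v))"
      by (intro continuous_on_compose2[OF continuous] continuous_intros) auto
  qed auto
  moreover have "{1..2} \<subseteq> (\<Union>n. A n)"
  proof
    fix c :: real assume c: "c \<in> {1..2}"
    have "c powr \<beta> \<le> c powr \<bar>\<beta>\<bar>" "c powr \<bar>\<beta>\<bar> \<le> 2 powr \<bar>\<beta>\<bar>"
      using c by (auto intro: powr_mono powr_mono2)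
    then have upper: "c powr \<beta> < K" unfolding K_def using powr_gt_zero[of 2 "\<bar>\<beta>\<bar>"] by linarith
    have "1 / K < inverse (2 powr \<bar>\<beta>\<bar>)" by (simp add: K_def field_simps)
    also have "\<dots> \<le> inverse (c powr \<bar>\<beta>\<bar>)" using c by (auto intro: powr_mono2)
    also have "\<dots> = c powr - \<bar>\<beta>\<bar>" by (simp add: powr_minus)
    also have "\<dots> \<le> c powr \<beta>" using c by (auto intro: powr_mono)
    finally obtain n where "\<forall>v. 0 < v \<and> v < 1 / Suc n \<longrightarrow> f (c * v) \<le> K * f v \<and> f v / K \<le> f (c * v)"
      using ratio_two_sided_bound[of c K] upper c by auto
    then have "c \<in> A n" using c by (auto simp: A_def)
    then show "c \<in> (\<Union>n. A n)" by blast
  qed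
  ultimately obtain n a b where ab: "1 \<le> a" "a < b" "{a..b} \<subseteq> A n"
    using closed_cover_of_interval_contains_interval[of A 1 2] by force
  then have "f (c * v) \<le> K * f v \<and> f v \<le> K * f (c * v)"
    if "a \<le> c" "c \<le> b" "0 < v" "v < 1 / Suc n" for c v
    using that K by (fastforce simp: A_def field_simps)
  then show ?thesis using ab K by (intro exI[of _ a] exI[of _ b] exI[of _ "1 / Suc n"] exI[of _ K]) auto
qed

lemma ratio_bounded_near_one:
  "\<exists>l>1. \<exists>\<delta>>0. \<exists>K>0. \<forall>\<sigma> u. 1 / l \<le> \<sigma> \<and> \<sigma> \<le> l \<and> 0 < u \<and> u < \<delta> \<longrightarrow> f (\<sigma> * u) \<le> K * f u"
proof -
  obtain a b \<delta> K where ab: "0 < a" "a < b" "0 < \<delta>" "0 < K"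
    and bound: "\<And>c v. a \<le> c \<Longrightarrow> c \<le> b \<Longrightarrow> 0 < v \<Longrightarrow> v < \<delta> \<Longrightarrow> f (c * v) \<le> K * f v \<and> f v \<le> K * f (c * v)"
    using ratio_bounded_on_interval by blast
  have "f (\<sigma> * u) \<le> (K * K) * f u" if \<sigma>: "a / b \<le> \<sigma>" "\<sigma> \<le> b / a" and u: "0 < u" "u < a * \<delta>" for \<sigma> u
  proof -
    have "\<sigma> > 0" using \<sigma> ab by (smt (verit) divide_pos_pos)
    obtain c c' where c: "a \<le> c" "c \<le> b" "a \<le> c'" "c' \<le> b" "\<sigma> = c / c'"
    proof (cases "\<sigma> \<ge> 1")
      case True
      then show ?thesis using that[of "a * \<sigma>" a] \<sigma> ab by (simp add: field_simps)
    next
      case False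
      then show ?thesis using that[of a "a / \<sigma>"] \<sigma> ab \<open>\<sigma> > 0\<close> by (simp add: field_simps)
    qed
    define w where "w = u / c'"
    have "a * \<delta> \<le> c' * \<delta>" using c ab by simp
    then have "u < c' * \<delta>" using u by linarith
    then have w: "0 < w" "w < \<delta>" "c' * w = u"
      using u c ab by (auto simp: w_def field_simps)
    have "f (\<sigma> * u) = f (c * w)" using w c ab by (simp add: w_def)
    also have "\<dots> \<le> K * f w" using bound c w by blast
    also have "\<dots> \<le> K * (K * f (c' * w))" using bound c w ab by (intro mult_left_mono) auto
    finally show ?thesis using w by simp
  qed
  then have "\<forall>\<sigma> u. 1 / (b / a) \<le> \<sigma> \<and> \<sigma> \<le> b / a \<and> 0 < u \<and> u < a * \<delta> \<longrightarrow> f (\<sigma> * u) \<le> (K * K) * f u"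
    by simp
  moreover have "b / a > 1" "a * \<delta> > 0" "K * K > 0" using ab by auto
  ultimately show ?thesis by blast
qed

lemma ratio_bounded_on_compact:
  assumes m: "0 < m" "m \<le> M"
  shows "\<exists>C>0. \<exists>\<delta>>0. \<forall>r y. m \<le> r \<and> r \<le> M \<and> 0 < y \<and> y < \<delta> \<longrightarrow> f (r * y) \<le> C * f y"
proof -
  obtain l \<delta> K where l: "l > 1" "\<delta> > 0" "K > 0"
    and bound: "\<And>\<sigma> u. 1 / l \<le> \<sigma> \<Longrightarrow> \<sigma> \<le> l \<Longrightarrow> 0 < u \<Longrightarrow> u < \<delta> \<Longrightarrow> f (\<sigma> * u) \<le> K * f u"
    using ratio_bounded_near_one by blast
  have iterate: "f (\<sigma> ^ n * u) \<le> K ^ n * f u"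
    if \<sigma>: "1 / l \<le> \<sigma>" "\<sigma> \<le> l" and u: "0 < u" "u < \<delta> / l ^ n" for n \<sigma> u
    using u
  proof (induction n arbitrary: u)
    case (Suc n)
    have "0 < \<sigma>" using \<sigma> l by (smt (verit) divide_pos_pos)
    have "\<sigma> * u \<le> l * u" using \<sigma> Suc.prems by (intro mult_right_mono) auto
    also have "\<dots> < \<delta> / l ^ n" using Suc.prems l by (simp add: field_simps)
    finally have "f (\<sigma> ^ n * (\<sigma> * u)) \<le> K ^ n * f (\<sigma> * u)"
      using Suc.IH \<open>0 < \<sigma>\<close> Suc.prems by simp
    also have "\<dots> \<le> K ^ n * (K * f u)"
    proof -
      have "\<delta> / l ^ Suc n \<le> \<delta>"
        using l one_le_power[of l "Suc n"] by (simp add: divide_le_eq mult_le_cancel_left1)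
      then show ?thesis using bound[OF \<sigma>] Suc.prems l by (intro mult_left_mono) auto
    qed
    finally show ?case by (simp add: ac_simps)
  qed simp
  obtain n where n: "max M (1 / m) < l ^ n" using real_arch_pow[OF l(1)] by blast
  define N where "N = Suc n"
  have "l ^ n \<le> l ^ N" unfolding N_def by (rule power_increasing) (use l in auto)
  then have N: "N > 0" "max M (1 / m) < l ^ N" using n by (auto simp: N_def)
  have "f (r * y) \<le> K ^ N * f y" if r: "m \<le> r" "r \<le> M" and y: "0 < y" "y < \<delta> / l ^ N" for r y
  proof -
    define \<sigma> where "\<sigma> = root N r"
    have "r = \<sigma> ^ N" using N m r by (simp add: \<sigma>_def)
    moreover have "1 / l \<le> \<sigma>"
    proof -
      have "m * l ^ N \<le> r * l ^ N" using r l by (intro mult_right_mono) auto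
      moreover have "1 < m * l ^ N" using N m by (simp add: field_simps)
      ultimately have "1 \<le> r * l ^ N" by linarith
      then have "inverse (l ^ N) \<le> r" using l by (simp add: field_simps)
      then have "root N (inverse (l ^ N)) \<le> \<sigma>" unfolding \<sigma>_def by (rule real_root_le_mono[OF N(1)])
      then show ?thesis using N l by (simp add: real_root_inverse real_root_divide real_root_power_cancel inverse_eq_divide)
    qed
    moreover have "\<sigma> \<le> l"
      using real_root_le_mono[OF N(1), of r "l ^ N"] N r l by (simp add: \<sigma>_def real_root_power_cancel)
    ultimately show ?thesis using iterate y by auto
  qed
  moreover have "K ^ N > 0" "\<delta> / l ^ N > 0" using l by auto
  ultimately show ?thesis by blast
qed

lemma Fint_scaled_ge:
  assumes "c > 0" "c powr \<beta> < K"
  shows "\<exists>d>0. \<exists>C. \<forall>v. 0 < v \<and> v \<le> d \<longrightarrow> (c / K) * Fint f v + C \<le> Fint f (c * v)"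
proof -
  have "0 < c powr \<beta>" using assms(1) by simp
  then have K: "K > 0" using assms(2) by linarith
  obtain \<delta> where \<delta>: "\<delta> > 0" "\<And>u. 0 < u \<and> u < \<delta> \<Longrightarrow> f (c * u) \<le> K * f u"
    using ratio_upper_bound[OF assms] by blast
  have "(c / K) * Fint f v + (Fint f (c * (\<delta> / 2)) - (c / K) * Fint f (\<delta> / 2)) \<le> Fint f (c * v)"
    if v: "0 < v" "v \<le> \<delta> / 2" for v
    using Fint_scaled_diff_ge[OF assms(1) K v] \<delta> v by (force simp: algebra_simps)
  then show ?thesis using \<delta> by (intro exI[of _ "\<delta> / 2"]) auto
qed

lemma Fint_scaled_le:
  assumes "c > 0" "0 < k" "k < c powr \<beta>"
  shows "\<exists>d>0. \<exists>C. \<forall>v. 0 < v \<and> v \<le> d \<longrightarrow> Fint f (c * v) \<le> (c / k) * Fint f v + C"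
proof -
  obtain \<delta> where \<delta>: "\<delta> > 0" "\<And>u. 0 < u \<and> u < \<delta> \<Longrightarrow> k * f u \<le> f (c * u)"
    using ratio_lower_bound[OF assms(1,3)] by blast
  have "Fint f (c * v) \<le> (c / k) * Fint f v + (Fint f (c * (\<delta> / 2)) - (c / k) * Fint f (\<delta> / 2))"
    if v: "0 < v" "v \<le> \<delta> / 2" for v
    using Fint_scaled_diff_le[OF assms(1,2) v] \<delta> v by (force simp: algebra_simps)
  then show ?thesis using \<delta> by (intro exI[of _ "\<delta> / 2"]) auto
qed

end

locale rv0_superlinear = rv0_continuous +
  assumes index_gt_one: "\<beta> > 1"
begin

lemma Fint_unbounded: "\<exists>v. 0 < v \<and> v \<le> 1 \<and> t \<le> Fint f v"
proof -
  have "(1/2::real) powr \<beta> < (1/2) powr 1"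
    by (rule powr_less_mono') (use index_gt_one in auto)
  then obtain \<delta> where \<delta>: "\<delta> > 0" "\<And>u. 0 < u \<and> u < \<delta> \<Longrightarrow> f ((1/2) * u) \<le> (1/2) * f u"
    using ratio_upper_bound[of "1/2" "1/2"] by auto
  define d where "d = min (\<delta>/2) 1"
  have d: "0 < d" "d < \<delta>" "d \<le> 1" using \<delta> by (auto simp: d_def)
  define a where "a = Fint f (d/2) - Fint f d"
  have a: "a > 0" using Fint_strict_antimono[of "d/2" d] d by (simp add: a_def)
  have halving: "Fint f d + real n * a \<le> Fint f (d / 2^n)" for n
  proof (induction n)
    case (Suc n)
    have v: "0 < d / 2^n" "d / 2^n \<le> d" using d by (auto simp: divide_le_eq)
    have "(1/2) / (1/2) * (Fint f (d/2^n) - Fint f d) \<le> Fint f ((1/2) * (d / 2^n)) - Fint f ((1/2) * d)"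
    proof (rule Fint_scaled_diff_ge)
      fix u assume "d / 2^n \<le> u" "u \<le> d"
      then show "f ((1/2) * u) \<le> (1/2) * f u" using \<delta>(2)[of u] v d by auto
    qed (use v in auto)
    then show ?case using Suc by (simp add: a_def algebra_simps)
  qed simp
  obtain n where n: "t - Fint f d < real n * a" using ex_less_of_nat_mult[OF a] by blast
  have "d \<le> 2^n" using d one_le_power[of "2::real" n] by linarith
  then show ?thesis
    by (intro exI[of _ "d / 2^n"]) (use halving[of n] n d in \<open>auto simp: divide_le_eq\<close>)
qed

lemma Fint_Finv:
  assumes "t \<ge> 0"
  shows "Fint f (Finv f t) = t" and "0 < Finv f t" and "Finv f t \<le> 1"
proof -
  obtain v where v: "0 < v" "v \<le> 1" "t \<le> Fint f v" using Fint_unbounded by blast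
  have "continuous_on {v..1} (Fint f)" by (rule continuous_on_subset[OF Fint_continuous]) (use v in auto)
  then obtain w where w: "v \<le> w" "w \<le> 1" "Fint f w = t"
    using IVT2'[of "Fint f" 1 t v] v assms by (auto simp: Fint_def)
  then have "Finv f t = w" using Finv_Fint[of w] v by auto
  then show "Fint f (Finv f t) = t" "0 < Finv f t" "Finv f t \<le> 1" using w v by auto
qed

lemma Finv_le_iff: "0 < v \<Longrightarrow> 0 \<le> t \<Longrightarrow> Finv f t \<le> v \<longleftrightarrow> Fint f v \<le> t"
  using Fint_Finv Fint_le_iff[of v "Finv f t"] by auto

lemma Finv_less: "0 < d \<Longrightarrow> 0 \<le> t \<Longrightarrow> Fint f d < t \<Longrightarrow> Finv f t < d"
  using Fint_Finv Fint_less_iff[of d "Finv f t"] by auto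

lemma Fint_scaled_ge_twice: "\<exists>m>0. \<exists>d>0. \<exists>C. \<forall>y. 0 < y \<and> y \<le> d \<longrightarrow> 2 * Fint f y + C \<le> Fint f (m * y)"
proof -
  define m where "m = (1/4::real) powr (1 / (\<beta> - 1))"
  have m: "m > 0" by (simp add: m_def)
  have "m powr \<beta> = m * m powr (\<beta> - 1)" using m powr_add[of m 1 "\<beta> - 1"] by simp
  also have "m powr (\<beta> - 1) = 1/4" using index_gt_one by (simp add: m_def powr_powr)
  finally have "m powr \<beta> < m / 2" using m by simp
  then obtain d C where "d > 0" "\<forall>v. 0 < v \<and> v \<le> d \<longrightarrow> (m / (m / 2)) * Fint f v + C \<le> Fint f (m * v)"
    using Fint_scaled_ge[OF m] by blast
  then show ?thesis using m by auto
qed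

lemma Fint_scaled_le_fraction:
  assumes "\<epsilon> > 0"
  shows "\<exists>M>0. \<exists>d>0. \<exists>C. \<forall>v. 0 < v \<and> v \<le> d \<longrightarrow> Fint f (M * v) \<le> \<epsilon> * Fint f v + C"
proof -
  define M where "M = (\<epsilon> / 2) powr (1 / (1 - \<beta>))"
  have M: "M > 0" using assms by (simp add: M_def)
  have M1: "M powr (1 - \<beta>) = \<epsilon> / 2" using assms index_gt_one by (simp add: M_def powr_powr)
  have "M = M powr (1 - \<beta>) * M powr \<beta>" using M by (simp flip: powr_add)
  then have "M / (M powr \<beta> / 2) = \<epsilon>" using M1 M by (simp add: field_simps)
  moreover have "0 < M powr \<beta> / 2" "M powr \<beta> / 2 < M powr \<beta>" using M by auto
  ultimately show ?thesis using Fint_scaled_le[OF M] M by metis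
qed

end

locale decaying_solution = rv0_superlinear +
  fixes g x :: "real \<Rightarrow> real"
  assumes g_pos: "\<And>t. t > 0 \<Longrightarrow> g t > 0"
    and x_pos: "\<And>t. t \<ge> 0 \<Longrightarrow> x t > 0"
    and x_deriv: "\<And>t. t > 0 \<Longrightarrow> (x has_real_derivative (- f (x t) + g t)) (at t)"
    and x_tendsto: "(x \<longlongrightarrow> 0) at_top"
    and g_dominates: "filterlim (\<lambda>t. g t / f (Finv f t)) at_top at_top"
begin

lemma Fint_x_has_derivative:
  "t > 0 \<Longrightarrow> ((\<lambda>t. Fint f (x t)) has_real_derivative (1 - g t / f (x t))) (at t)"
  using f_pos[of "x t"] x_pos[of t]
  by (intro DERIV_cong[OF DERIV_chain2[OF Fint_has_derivative x_deriv]]) (auto simp: field_simps)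

lemma eventually_x_less: "e > 0 \<Longrightarrow> eventually (\<lambda>t. x t < e) at_top"
  using order_tendstoD(2)[OF x_tendsto] by auto

lemma eventually_g_over_f_Finv_ge: "eventually (\<lambda>t. Z \<le> g t / f (Finv f t)) at_top"
  using g_dominates unfolding filterlim_at_top by blast

lemma eventually_Fint_x_nonneg: "eventually (\<lambda>t. 0 \<le> Fint f (x t)) at_top"
  using eventually_x_less[OF zero_less_one] eventually_ge_at_top[of 0]
  by eventually_elim (use x_pos in \<open>auto intro!: Fint_nonneg\<close>)

lemma Fint_x_le_linear: "t \<ge> 1 \<Longrightarrow> Fint f (x t) \<le> Fint f (x 1) + (t - 1)"
proof -
  assume "t \<ge> 1"
  have "(\<lambda>s. Fint f (x s) - s) t \<le> (\<lambda>s. Fint f (x s) - s) 1"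
  proof (rule deriv_nonpos_imp_antimono[OF _ _ \<open>t \<ge> 1\<close>])
    fix s assume s: "s \<in> {1..t}"
    then show "((\<lambda>s. Fint f (x s) - s) has_real_derivative (1 - g s / f (x s)) - 1) (at s)"
      by (intro DERIV_diff Fint_x_has_derivative) (auto intro: DERIV_ident)
    show "(1 - g s / f (x s)) - 1 \<le> 0" using s g_pos[of s] x_pos[of s] f_pos[of "x s"] by simp
  qed
  then show ?thesis by simp
qed

lemma x_bounded_below_by_Finv: "\<exists>m>0. eventually (\<lambda>t. m * Finv f t < x t) at_top"
proof -
  obtain m d C where m: "m > 0" "d > 0"
    and bound: "\<And>y. 0 < y \<Longrightarrow> y \<le> d \<Longrightarrow> 2 * Fint f y + C \<le> Fint f (m * y)"
    using Fint_scaled_ge_twice by blast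
  have "m * Finv f t < x t" if t: "t \<ge> max 1 (max (Fint f d + 1) (Fint f (x 1) - C))" for t
  proof -
    have "Finv f t < d" using t m by (intro Finv_less) auto
    then have "2 * t + C \<le> Fint f (m * Finv f t)"
      using bound[of "Finv f t"] Fint_Finv[of t] t by auto
    moreover have "Fint f (x t) \<le> Fint f (x 1) + (t - 1)" using t by (intro Fint_x_le_linear) auto
    ultimately have "Fint f (x t) < Fint f (m * Finv f t)" using t by auto
    then show ?thesis using Fint_less_iff[of "x t" "m * Finv f t"] x_pos[of t] Fint_Finv[of t] t m by auto
  qed
  then show ?thesis using m unfolding eventually_at_top_linorder by blast
qed

lemma not_eventually_g_ge_twice_f_x: "\<not> eventually (\<lambda>t. 2 * f (x t) \<le> g t) at_top"
proof
  assume "eventually (\<lambda>t. 2 * f (x t) \<le> g t) at_top"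
  then obtain T where T: "T \<ge> 1" "\<And>t. t \<ge> T \<Longrightarrow> 2 * f (x t) \<le> g t"
    unfolding eventually_at_top_linorder by (metis max.cobounded1 max.cobounded2 order.trans)
  have decreasing: "Fint f (x t) \<le> Fint f (x T) + T - t" if "t \<ge> T" for t
  proof -
    have "(\<lambda>s. Fint f (x s) + s) t \<le> (\<lambda>s. Fint f (x s) + s) T"
    proof (rule deriv_nonpos_imp_antimono[OF _ _ that])
      fix s assume s: "s \<in> {T..t}"
      then show "((\<lambda>s. Fint f (x s) + s) has_real_derivative (1 - g s / f (x s)) + 1) (at s)"
        using T by (intro DERIV_add Fint_x_has_derivative) (auto intro: DERIV_ident)
      have "f (x s) > 0" using s T x_pos[of s] f_pos[of "x s"] by auto
      then show "(1 - g s / f (x s)) + 1 \<le> 0" using T(2)[of s] s by (simp add: le_divide_eq)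
    qed
    then show ?thesis by simp
  qed
  have "eventually (\<lambda>t. Fint f (x t) < 0) at_top"
    using eventually_ge_at_top[of "Fint f (x T) + T + 1"] eventually_ge_at_top[of T]
    by eventually_elim (use decreasing in force)
  then have "eventually (\<lambda>_. False) (at_top :: real filter)"
    using eventually_Fint_x_nonneg by eventually_elim simp
  then show False by simp
qed

lemma eventually_g_ge_twice_f_x:
  assumes "eventually (\<lambda>t. x t < M * Finv f t) at_top"
  shows "eventually (\<lambda>t. 2 * f (x t) \<le> g t) at_top"
proof -
  obtain m where m: "m > 0" "eventually (\<lambda>t. m * Finv f t < x t) at_top"
    using x_bounded_below_by_Finv by blast
  obtain C \<delta> where C: "C > 0" "\<delta> > 0"
    and bound: "\<And>r y. m \<le> r \<Longrightarrow> r \<le> max m M \<Longrightarrow> 0 < y \<Longrightarrow> y < \<delta> \<Longrightarrow> f (r * y) \<le> C * f y"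
    using ratio_bounded_on_compact[OF m(1), of "max m M"] by auto
  show ?thesis
    using assms m(2) eventually_g_over_f_Finv_ge[of "2 * C"] eventually_ge_at_top[of "max 0 (Fint f \<delta> + 1)"]
  proof eventually_elim
    case (elim t)
    define y where "y = Finv f t"
    have y: "0 < y" "y < \<delta>" using Fint_Finv[of t] Finv_less[of \<delta> t] elim C by (auto simp: y_def)
    have "M * y \<le> max m M * y" using y by (intro mult_right_mono) auto
    moreover have "x t < M * y" "m * y < x t" using elim by (auto simp: y_def)
    ultimately have "m * y \<le> x t" "x t \<le> max m M * y" by linarith+
    then have "m \<le> x t / y" "x t / y \<le> max m M"
      using y by (simp_all add: le_divide_eq divide_le_eq)
    then have "f (x t) \<le> C * f y" using bound[of "x t / y" y] y by simp
    moreover have "2 * C * f y \<le> g t" using elim f_pos[of y] y by (simp add: y_def le_divide_eq)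
    ultimately show ?case by linarith
  qed
qed

lemma Fint_x_scaled_has_derivative:
  assumes "M > 0" "t > 0"
  shows "((\<lambda>t. Fint f (x t / M)) has_real_derivative -(1 / f (x t / M)) * ((- f (x t) + g t) / M)) (at t)"
  using assms x_pos[of t]
  by (intro DERIV_chain2[OF Fint_has_derivative] DERIV_cdivide x_deriv) auto

lemma x_increasing_at_crossings:
  assumes M: "M > 0"
  shows "\<exists>T>0. \<forall>t\<ge>T. Fint f (x t / M) = t \<longrightarrow> f (x t) < g t"
proof -
  define K where "K = 2 * M powr \<beta>"
  have "M powr \<beta> < K" using M by (simp add: K_def)
  then obtain \<delta> where \<delta>: "\<delta> > 0" "\<And>u. 0 < u \<and> u < \<delta> \<Longrightarrow> f (M * u) \<le> K * f u"
    using ratio_upper_bound[OF M] by blast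
  have M\<delta>: "M * \<delta> > 0" using M \<delta> by simp
  have "eventually (\<lambda>t. K < g t / f (Finv f t) \<and> x t < M * \<delta> \<and> t \<ge> 1) at_top"
    using eventually_g_over_f_Finv_ge[of "K + 1"] eventually_x_less[OF M\<delta>] eventually_ge_at_top[of 1]
    by eventually_elim auto
  then obtain T where T: "T \<ge> 1" "\<And>t. t \<ge> T \<Longrightarrow> K < g t / f (Finv f t) \<and> x t < M * \<delta>"
    unfolding eventually_at_top_linorder by (metis linorder_linear order_trans)
  have "f (x t) < g t" if t: "t \<ge> T" "Fint f (x t / M) = t" for t
  proof -
    define v where "v = x t / M"
    have v: "0 < v" "v < \<delta>" "Finv f t = v" "M * v = x t"
      using x_pos[of t] t T(1) T(2)[OF t(1)] M Finv_Fint[of v] by (auto simp: v_def field_simps)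
    have "f (x t) \<le> K * f v" using \<delta>(2)[of v] v by simp
    also have "\<dots> < g t" using T(2)[OF t(1)] v f_pos[of v] by (simp add: less_divide_eq)
    finally show ?thesis .
  qed
  then show ?thesis using T(1) by (intro exI[of _ T]) auto
qed

lemma eventually_x_ge_Finv:
  assumes M: "M > 0"
  shows "eventually (\<lambda>t. M * Finv f t \<le> x t) at_top"
proof -
  define q where "q t = Fint f (x t / M) - t" for t
  obtain T where T: "T > 0" "\<And>t. t \<ge> T \<Longrightarrow> Fint f (x t / M) = t \<Longrightarrow> f (x t) < g t"
    using x_increasing_at_crossings[OF M] by blast
  have q_deriv: "(q has_real_derivative -(1 / f (x t / M)) * ((- f (x t) + g t) / M) - 1) (at t)"
    if "t > 0" for t
    unfolding q_def using that M by (intro DERIV_diff Fint_x_scaled_has_derivative) (auto intro: DERIV_ident)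
  have q_cont: "continuous_on {T..} q"
    by (rule continuous_at_imp_continuous_on) (use T in \<open>auto intro!: DERIV_isCont q_deriv\<close>)
  have q_decr: "\<exists>d. (q has_real_derivative d) (at t) \<and> d < 0" if t: "t \<ge> T" "q t = 0" for t
  proof -
    have "0 \<le> (1 / f (x t / M)) * ((- f (x t) + g t) / M)"
      using T(2)[of t] t M x_pos[of t] f_pos[of "x t / M"] T(1) by (simp add: q_def)
    then show ?thesis using q_deriv[of t] t T(1) by (intro exI) auto
  qed
  show ?thesis
  proof (cases "\<exists>u\<ge>T. q u \<le> 0")
    case True
    then obtain u where u: "u \<ge> T" "q u \<le> 0" by blast
    have "M * Finv f t \<le> x t" if "t \<ge> u" for t
    proof -
      have "q t \<le> 0" by (rule nonpos_persists_if_decreasing_at_zeros[OF q_cont q_decr u that])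
      then have "Finv f t \<le> x t / M" using Finv_le_iff[of "x t / M" t] x_pos[of t] that u T M
        by (simp add: q_def)
      then show ?thesis using M by (simp add: field_simps)
    qed
    then show ?thesis unfolding eventually_at_top_linorder by blast
  next
    case False
    have "x t < M * Finv f t" if "t \<ge> T" for t
    proof -
      have "t < Fint f (x t / M)" using False that by (auto simp: q_def)
      then have "x t / M < Finv f t" using Finv_le_iff[of "x t / M" t] x_pos[of t] that T M by simp
      then show ?thesis using M by (simp add: field_simps)
    qed
    then have "eventually (\<lambda>t. 2 * f (x t) \<le> g t) at_top"
      by (intro eventually_g_ge_twice_f_x) (auto simp: eventually_at_top_linorder)
    then show ?thesis using not_eventually_g_ge_twice_f_x by contradiction
  qed
qed

lemma x_over_Finv_tendsto: "filterlim (\<lambda>t. x t / Finv f t) at_top at_top"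
  unfolding filterlim_at_top
proof
  fix Z :: real
  have Z: "max Z 1 > 0" by simp
  show "eventually (\<lambda>t. Z \<le> x t / Finv f t) at_top"
    using eventually_x_ge_Finv[OF Z] eventually_ge_at_top[of 0]
  proof eventually_elim
    case (elim t)
    have "Z * Finv f t \<le> max Z 1 * Finv f t" using Fint_Finv(2)[of t] elim by (intro mult_right_mono) auto
    then have "Z * Finv f t \<le> x t" using elim by linarith
    then show ?case using Fint_Finv(2)[of t] elim by (simp add: le_divide_eq)
  qed
qed

lemma Fint_x_over_t_tendsto: "((\<lambda>t. Fint f (x t) / t) \<longlongrightarrow> 0) at_top"
proof (rule order_tendstoI)
  fix a :: real assume "a < 0"
  show "eventually (\<lambda>t. a < Fint f (x t) / t) at_top"
    using eventually_Fint_x_nonneg eventually_gt_at_top[of 0]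
    by eventually_elim (use \<open>a < 0\<close> in \<open>auto intro: less_le_trans\<close>)
next
  fix a :: real assume a: "0 < a"
  obtain M d C where M: "M > 0" "d > 0"
    and bound: "\<And>v. 0 < v \<Longrightarrow> v \<le> d \<Longrightarrow> Fint f (M * v) \<le> (a / 2) * Fint f v + C"
    using Fint_scaled_le_fraction[of "a / 2"] a by auto
  have Md: "M * d > 0" using M by simp
  show "eventually (\<lambda>t. Fint f (x t) / t < a) at_top"
    using eventually_x_ge_Finv[OF M(1)] eventually_x_less[OF Md] eventually_gt_at_top[of "max 0 (2 * C / a)"]
  proof eventually_elim
    case (elim t)
    define v where "v = x t / M"
    have v: "0 < v" "v \<le> d" "M * v = x t" using x_pos[of t] elim M by (auto simp: v_def field_simps)
    have "Fint f v \<le> t" using Finv_le_iff[of v t] elim v M by (simp add: v_def field_simps)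
    then have "(a / 2) * Fint f v \<le> (a / 2) * t" using a by (intro mult_left_mono) auto
    then have "Fint f (x t) \<le> (a / 2) * t + C" using bound[OF v(1,2)] v(3) by auto
    also have "\<dots> < a * t" using elim a by (simp add: field_simps)
    finally show ?case using elim by (simp add: divide_less_eq)
  qed
qed

end

theorem mainTheorem10:
  fixes f g x :: "real \<Rightarrow> real" and \<xi> \<beta> \<theta> :: real
  assumes f_cont: "continuous_on UNIV f"
    and f_lip: "loc_lipschitz f"
    and f0: "f 0 = 0"
    and f_sign: "\<And>u. u \<noteq> 0 \<Longrightarrow> u * f u > 0"
    and g_cont: "continuous_on {0..} g"
    and g_pos: "\<And>t. t > 0 \<Longrightarrow> g t > 0"
    and \<xi>_pos: "\<xi> > 0"
    and x_init: "x 0 = \<xi>"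
    and x_ode: "\<And>t. t \<ge> 0 \<Longrightarrow> (x has_real_derivative (- f (x t) + g t)) (at t within {0..})"
    and x_lim: "(x \<longlongrightarrow> 0) at_top"
    and g_over_f: "filterlim (\<lambda>t. g t / f (Finv f t)) at_top at_top"
    and f_RV: "RV0 f \<beta>" and \<beta>_gt: "\<beta> > 1"
    and g_RV: "RVinf g (- \<theta>)"
    and cases: "\<theta> > 0 \<or> (\<theta> = 0 \<and> (\<exists>d. antimono_on {0..} d \<and> g \<sim>[at_top] d))"
  shows "filterlim (\<lambda>t. x t / Finv f t) at_top at_top \<and>
         ((\<lambda>t. Fint f (x t) / t) \<longlongrightarrow> 0) at_top"
proof -
  have x_deriv: "(x has_real_derivative (- f (x t) + g t)) (at t)" if "t > 0" for t
  proof -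
    have "at t within {0..} = at t" using that by (intro at_within_interior) simp
    then show ?thesis using x_ode[of t] that by simp
  qed
  have "continuous_on {0..} x" by (rule DERIV_continuous_on[OF x_ode]) auto
  then have x_pos: "x t > 0" if "t \<ge> 0" for t
    using ode_solution_pos[of f g x t] f0 g_pos x_deriv x_init \<xi>_pos that by blast
  have "continuous_on {0<..} f" using f_cont by (rule continuous_on_subset) simp
  then interpret decaying_solution f \<beta> g x
    using f_RV \<beta>_gt g_pos x_pos x_deriv x_lim g_over_f by unfold_locales
  show ?thesis using x_over_Finv_tendsto Fint_x_over_t_tendsto by blast
qed

end
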